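(* Let $\mathscr{H}$ be a finite-dimensional complex Hilbert space, let $A=\{a_k\}_{k=1}^{m}$ be a tight frame of $\mathscr{H}$ with frame bound $\alpha>0$ and $B=\{b_j\}_{j=1}^{n}$ a tight frame of $\mathscr{H}$ with frame bound $\beta>0$, and suppose $A$ and $B$ are $s$-order incompatible. Let $$t_{\min}=\min\Big\{t\ :\ \text{for all } S\subsetneq I,\ T\subsetneq J \text{ with } |S|+|T|>t,\ \operatorname{span}\big(\{a_k\}_{k\in S}\cup\{b_j\}_{j\in T}\big)=\mathscr{H}\Big\},$$ where $I=\{1,\dots,m\}$ and $J=\{1,\dots,n\}$. Then $s+t_{\min}=m+n$.
   Context: A finite family $\{a_k\}_{k=1}^{m}\subset\mathscr{H}$ is a tight frame with frame bound $\alpha>0$ if $\sum_{k=1}^{m}|\langle x,a_k\rangle|^2=\alpha\|x\|^2$ for all $x\in\mathscr{H}$. The tight frames $A$ (bound $\alpha$) and $B$ (bound $\beta$) are called $s$-order incompatible, for an integer $s$, if: (1) for all nonempty $S\subseteq I$, $T\subseteq J$ with $|S|+|T|<s$ and every nonzero $x\in\mathscr{H}$, the two equalities $\sum_{k\in S}|\langle x,a_k\rangle|^2=\alpha\|x\|^2$ and $\sum_{j\in T}|\langle x,b_j\rangle|^2=\beta\|x\|^2$ do not both hold; and (2) there exist nonempty $S\subseteq I$, $T\subseteq J$ with $|S|+|T|=s$ and a nonzero $x\in\mathscr{H}$ for which both equalities hold. Spans are over $\mathbb{C}$; $S\subsetneq I$ denotes a proper (possibly empty) subset. *)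

theory Defs
  imports "HOL-Analysis.Analysis"
begin

text \<open>A finite-dimensional complex Hilbert space is modelled (up to unitary isomorphism)
as complex^d with the standard inner product, linear in the first argument.\<close>

definition cinner :: "complex ^ 'd \<Rightarrow> complex ^ 'd \<Rightarrow> complex" where
  "cinner x y = (\<Sum>i\<in>UNIV. x $ i * cnj (y $ i))"

definition tight_frame :: "(nat \<Rightarrow> complex ^ 'd) \<Rightarrow> nat \<Rightarrow> real \<Rightarrow> bool" where
  "tight_frame a m \<alpha> \<longleftrightarrow> \<alpha> > 0 \<and>
     (\<forall>x :: complex ^ 'd. (\<Sum>k\<in>{1..m}. (cmod (cinner x (a k)))\<^sup>2) = \<alpha> * (norm x)\<^sup>2)"

definition s_order_incompatible ::
  "(nat \<Rightarrow> complex ^ 'd) \<Rightarrow> nat \<Rightarrow> real \<Rightarrow> (nat \<Rightarrow> complex ^ 'd) \<Rightarrow> nat \<Rightarrow> real \<Rightarrow> nat \<Rightarrow> bool" where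
  "s_order_incompatible a m \<alpha> b n \<beta> s \<longleftrightarrow>
     (\<forall>S T x. S \<noteq> {} \<and> S \<subseteq> {1..m} \<and> T \<noteq> {} \<and> T \<subseteq> {1..n} \<and> card S + card T < s \<and> x \<noteq> 0 \<longrightarrow>
        \<not> ((\<Sum>k\<in>S. (cmod (cinner x (a k)))\<^sup>2) = \<alpha> * (norm x)\<^sup>2 \<and>
           (\<Sum>j\<in>T. (cmod (cinner x (b j)))\<^sup>2) = \<beta> * (norm x)\<^sup>2)) \<and>
     (\<exists>S T x. S \<noteq> {} \<and> S \<subseteq> {1..m} \<and> T \<noteq> {} \<and> T \<subseteq> {1..n} \<and> card S + card T = s \<and> x \<noteq> 0 \<and>
        (\<Sum>k\<in>S. (cmod (cinner x (a k)))\<^sup>2) = \<alpha> * (norm x)\<^sup>2 \<and>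
        (\<Sum>j\<in>T. (cmod (cinner x (b j)))\<^sup>2) = \<beta> * (norm x)\<^sup>2)"

text \<open>Complex span: \<open>vec.span\<close> is the span w.r.t. the scalar multiplication \<open>(*s)\<close> over complex.\<close>

definition t_min :: "(nat \<Rightarrow> complex ^ 'd) \<Rightarrow> nat \<Rightarrow> (nat \<Rightarrow> complex ^ 'd) \<Rightarrow> nat \<Rightarrow> nat" where
  "t_min a m b n = (LEAST t. \<forall>S T. S \<subset> {1..m} \<and> T \<subset> {1..n} \<and> card S + card T > t \<longrightarrow>
       vec.span (a ` S \<union> b ` T) = (UNIV :: (complex ^ 'd) set))"

end

theory Submission
  imports Defs
begin

text \<open>By tightness, the frame sum over a subset \<open>S\<close> attains \<open>\<alpha>\<parallel>x\<parallel>\<^sup>2\<close> exactly when \<open>x\<close> is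
orthogonal to every frame vector outside \<open>S\<close>. Hence a nonzero \<open>x\<close> witnessing both equalities
for \<open>S, T\<close> is the same thing as a nonzero vector orthogonal to all \<open>a\<^sub>k\<close> with \<open>k \<notin> S\<close> and
all \<open>b\<^sub>j\<close> with \<open>j \<notin> T\<close>, i.e. a witness that these complementary vectors do not span.
Passing to complements turns the least order \<open>s\<close> of a witness into the largest total size
\<open>m + n - s\<close> of a non-spanning pair of proper subsets, which is \<open>t\<^sub>m\<^sub>i\<^sub>n\<close>.\<close>

lemma Re_cinner: "Re (cinner x y) = inner x y"
  by (simp add: inner_vec_def cinner_def inner_complex_def Re_sum)

lemma cinner_self_eq_0_iff: "cinner x x = 0 \<longleftrightarrow> x = 0"
proof
  assume "cinner x x = 0"
  then have "inner x x = 0" by (metis Re_cinner zero_complex.sel(1))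
  then show "x = 0" by simp
qed (simp add: cinner_def)

lemma cinner_scale_right: "cinner x (c *s y) = cnj c * cinner x y"
  by (simp add: cinner_def sum_distrib_left algebra_simps)

lemma cinner_add_right: "cinner x (y + z) = cinner x y + cinner x z"
  by (simp add: cinner_def sum.distrib algebra_simps)

lemma cinner_zero_right: "cinner x 0 = 0"
  by (simp add: cinner_def)

lemma scaleR_eq_vector_smult: "c *\<^sub>R (y :: complex ^ 'd) = complex_of_real c *s y"
  unfolding vec_eq_iff vector_scaleR_component vector_smult_component
  by (simp add: scaleR_conv_of_real)

lemma subspace_vec_span: "subspace (vec.span (V :: (complex ^ 'd) set))"
  unfolding subspace_def
  by (auto simp: scaleR_eq_vector_smult vec.span_zero vec.span_add vec.span_scale)

text \<open>The real orthogonal complement of a complex subspace is already complex orthogonal to it,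
because \<open>Im \<langle>x, v\<rangle> = Re \<langle>x, \<i> v\<rangle>\<close>.\<close>

lemma cinner_orthogonal_exists:
  fixes V :: "(complex ^ 'd) set"
  assumes "vec.span V \<noteq> UNIV"
  obtains x where "x \<noteq> 0" "\<And>v. v \<in> V \<Longrightarrow> cinner x v = 0"
proof -
  let ?W = "vec.span V"
  have span_W: "span ?W = ?W"
    using subspace_vec_span span_eq_iff by blast
  have "span ?W \<subset> span UNIV"
    using assms by (simp add: span_W span_UNIV psubset_eq)
  then obtain x where "x \<noteq> 0" and x_orth: "\<And>y. y \<in> ?W \<Longrightarrow> inner x y = 0"
    using orthogonal_to_subspace_exists_gen span_W by (metis orthogonal_def)
  have "cinner x v = 0" if "v \<in> V" for v
  proof -
    have "v \<in> ?W" "\<i> *s v \<in> ?W"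
      using that by (simp_all add: vec.span_base vec.span_scale)
    then have "Re (cinner x v) = 0" "Re (cinner x (\<i> *s v)) = 0"
      by (simp_all add: Re_cinner x_orth)
    then show ?thesis
      by (simp add: cinner_scale_right complex_eq_iff)
  qed
  with \<open>x \<noteq> 0\<close> show ?thesis using that by blast
qed

lemma vec_span_eq_UNIV_iff_cinner:
  fixes V :: "(complex ^ 'd) set"
  shows "vec.span V = UNIV \<longleftrightarrow> (\<forall>x. (\<forall>v\<in>V. cinner x v = 0) \<longrightarrow> x = 0)"
proof
  assume span_V: "vec.span V = UNIV"
  show "\<forall>x. (\<forall>v\<in>V. cinner x v = 0) \<longrightarrow> x = 0"
  proof (intro allI impI)
    fix x
    assume "\<forall>v\<in>V. cinner x v = 0"
    moreover have "vec.subspace {y. cinner x y = 0}"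
      unfolding vec.subspace_def
      by (auto simp: cinner_zero_right cinner_add_right cinner_scale_right)
    ultimately have "vec.span V \<subseteq> {y. cinner x y = 0}"
      by (intro vec.span_minimal) auto
    then show "x = 0"
      using span_V cinner_self_eq_0_iff by auto
  qed
qed (metis cinner_orthogonal_exists)

lemma tight_frame_sum_eq_iff:
  assumes "tight_frame a m \<alpha>" "S \<subseteq> {1..m}"
  shows "(\<Sum>k\<in>S. (cmod (cinner x (a k)))\<^sup>2) = \<alpha> * (norm x)\<^sup>2 \<longleftrightarrow>
         (\<forall>k\<in>{1..m} - S. cinner x (a k) = 0)"
proof -
  have "(\<Sum>k\<in>{1..m}. (cmod (cinner x (a k)))\<^sup>2) =
        (\<Sum>k\<in>S. (cmod (cinner x (a k)))\<^sup>2) + (\<Sum>k\<in>{1..m} - S. (cmod (cinner x (a k)))\<^sup>2)"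
    using assms(2) by (metis add.commute finite_atLeastAtMost sum.subset_diff)
  moreover have "(\<Sum>k\<in>{1..m}. (cmod (cinner x (a k)))\<^sup>2) = \<alpha> * (norm x)\<^sup>2"
    using assms(1) unfolding tight_frame_def by blast
  moreover have "(\<Sum>k\<in>{1..m} - S. (cmod (cinner x (a k)))\<^sup>2) = 0 \<longleftrightarrow>
                 (\<forall>k\<in>{1..m} - S. cinner x (a k) = 0)"
    by (simp add: sum_nonneg_eq_0_iff)
  ultimately show ?thesis by linarith
qed

lemma tight_frames_span_complement_iff:
  assumes "tight_frame a m \<alpha>" "tight_frame b n \<beta>" "S \<subseteq> {1..m}" "T \<subseteq> {1..n}"
  shows "vec.span (a ` ({1..m} - S) \<union> b ` ({1..n} - T)) = UNIV \<longleftrightarrow>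
         \<not> (\<exists>x. x \<noteq> 0 \<and> (\<Sum>k\<in>S. (cmod (cinner x (a k)))\<^sup>2) = \<alpha> * (norm x)\<^sup>2 \<and>
                           (\<Sum>j\<in>T. (cmod (cinner x (b j)))\<^sup>2) = \<beta> * (norm x)\<^sup>2)"
  unfolding vec_span_eq_UNIV_iff_cinner
    tight_frame_sum_eq_iff[OF assms(1,3)] tight_frame_sum_eq_iff[OF assms(2,4)]
  by blast

lemma t_min_eqI:
  assumes spanning: "\<And>S T. S \<subset> {1..m} \<Longrightarrow> T \<subset> {1..n} \<Longrightarrow> card S + card T > t \<Longrightarrow>
                         vec.span (a ` S \<union> b ` T) = UNIV"
    and non_spanning: "S\<^sub>0 \<subset> {1..m}" "T\<^sub>0 \<subset> {1..n}" "card S\<^sub>0 + card T\<^sub>0 = t"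
                      "vec.span (a ` S\<^sub>0 \<union> b ` T\<^sub>0) \<noteq> UNIV"
  shows "t_min a m b n = t"
  unfolding t_min_def
proof (rule Least_equality)
  fix u
  assume "\<forall>S T. S \<subset> {1..m} \<and> T \<subset> {1..n} \<and> card S + card T > u \<longrightarrow>
                vec.span (a ` S \<union> b ` T) = UNIV"
  then show "t \<le> u"
    using non_spanning by (meson not_le)
qed (use spanning in blast)

lemma card_atLeastAtMost_Diff:
  "S \<subseteq> {1..m} \<Longrightarrow> card ({1..m} - S) = m - card S"
  by (simp add: card_Diff_subset finite_subset)

lemma card_le_of_subset_atLeastAtMost:
  "S \<subseteq> {1..m} \<Longrightarrow> card S \<le> m"
  using card_mono[of "{1..m}" S] by simp

lemma s_order_incompatible_le:
  assumes "s_order_incompatible a m \<alpha> b n \<beta> s"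
  shows "s \<le> m + n"
proof -
  obtain S T where "S \<subseteq> {1..m}" "T \<subseteq> {1..n}" "card S + card T = s"
    using assms unfolding s_order_incompatible_def by blast
  then show ?thesis
    using card_le_of_subset_atLeastAtMost add_le_mono by metis
qed

lemma s_order_incompatible_spanning:
  assumes "tight_frame a m \<alpha>" "tight_frame b n \<beta>" "s_order_incompatible a m \<alpha> b n \<beta> s"
    and S: "S \<subset> {1..m}" and T: "T \<subset> {1..n}" and "card S + card T > m + n - s"
  shows "vec.span (a ` S \<union> b ` T) = UNIV"
proof -
  have "card S \<le> m" "card T \<le> n"
    using S T by (simp_all add: card_le_of_subset_atLeastAtMost)
  moreover have "card ({1..m} - S) = m - card S" "card ({1..n} - T) = n - card T"
    using S T card_atLeastAtMost_Diff psubset_imp_subset by blast+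
  ultimately have "card ({1..m} - S) + card ({1..n} - T) < s"
    using \<open>card S + card T > m + n - s\<close> by linarith
  moreover have "{1..m} - S \<noteq> {}" "{1..n} - T \<noteq> {}"
    using S T by blast+
  ultimately have "vec.span (a ` ({1..m} - ({1..m} - S)) \<union> b ` ({1..n} - ({1..n} - T))) = UNIV"
    using assms(3)[unfolded s_order_incompatible_def, THEN conjunct1, rule_format,
        of "{1..m} - S" "{1..n} - T"]
      tight_frames_span_complement_iff[OF assms(1,2), of "{1..m} - S" "{1..n} - T"]
    by blast
  moreover have "{1..m} - ({1..m} - S) = S" "{1..n} - ({1..n} - T) = T"
    using S T by blast+
  ultimately show ?thesis
    by simp
qed

lemma s_order_incompatible_obtains_non_spanning:
  assumes "tight_frame a m \<alpha>" "tight_frame b n \<beta>" "s_order_incompatible a m \<alpha> b n \<beta> s"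
  obtains S T where "S \<subset> {1..m}" "T \<subset> {1..n}" "card S + card T = m + n - s"
    "vec.span (a ` S \<union> b ` T) \<noteq> UNIV"
proof -
  obtain S\<^sub>0 T\<^sub>0 x\<^sub>0 where S\<^sub>0: "S\<^sub>0 \<noteq> {}" "S\<^sub>0 \<subseteq> {1..m}" and T\<^sub>0: "T\<^sub>0 \<noteq> {}" "T\<^sub>0 \<subseteq> {1..n}"
    and "card S\<^sub>0 + card T\<^sub>0 = s" and "x\<^sub>0 \<noteq> 0"
    and "(\<Sum>k\<in>S\<^sub>0. (cmod (cinner x\<^sub>0 (a k)))\<^sup>2) = \<alpha> * (norm x\<^sub>0)\<^sup>2"
    and "(\<Sum>j\<in>T\<^sub>0. (cmod (cinner x\<^sub>0 (b j)))\<^sup>2) = \<beta> * (norm x\<^sub>0)\<^sup>2"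
    using assms(3) unfolding s_order_incompatible_def by blast
  show ?thesis
  proof
    show "{1..m} - S\<^sub>0 \<subset> {1..m}" "{1..n} - T\<^sub>0 \<subset> {1..n}"
      using S\<^sub>0 T\<^sub>0 by blast+
    have "card S\<^sub>0 \<le> m" "card T\<^sub>0 \<le> n"
      using S\<^sub>0(2) T\<^sub>0(2) by (simp_all add: card_le_of_subset_atLeastAtMost)
    then show "card ({1..m} - S\<^sub>0) + card ({1..n} - T\<^sub>0) = m + n - s"
      using card_atLeastAtMost_Diff[OF S\<^sub>0(2)] card_atLeastAtMost_Diff[OF T\<^sub>0(2)]
        \<open>card S\<^sub>0 + card T\<^sub>0 = s\<close> by linarith
    show "vec.span (a ` ({1..m} - S\<^sub>0) \<union> b ` ({1..n} - T\<^sub>0)) \<noteq> UNIV"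
      using tight_frames_span_complement_iff[OF assms(1,2) S\<^sub>0(2) T\<^sub>0(2)] \<open>x\<^sub>0 \<noteq> 0\<close>
        \<open>_ = \<alpha> * _\<close> \<open>_ = \<beta> * _\<close> by blast
  qed
qed

theorem mainTheorem3:
  fixes a b :: "nat \<Rightarrow> complex ^ 'd" and m n s :: nat and \<alpha> \<beta> :: real
  assumes "tight_frame a m \<alpha>"
    and "tight_frame b n \<beta>"
    and "s_order_incompatible a m \<alpha> b n \<beta> s"
  shows "s + t_min a m b n = m + n"
proof -
  obtain S T where non_spanning: "S \<subset> {1..m}" "T \<subset> {1..n}" "card S + card T = m + n - s"
    "vec.span (a ` S \<union> b ` T) \<noteq> UNIV"
    using s_order_incompatible_obtains_non_spanning[OF assms] .
  have "t_min a m b n = m + n - s"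
    by (rule t_min_eqI[OF s_order_incompatible_spanning[OF assms] non_spanning])
  then show ?thesis
    using s_order_incompatible_le[OF assms(3)] by simp
qed

end
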